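(* Let $V:\mathbb{R}\to\mathbb{R}$ be continuous and $T$-periodic and suppose that the monodromy of the Hill equation $\ddot u+V(t)u=0$ is elliptic. Then there exist real solutions $u_1,u_2$ with Wronskian $u_1\dot u_2-u_2\dot u_1=1$ such that $w(t)=\sqrt{u_1(t)^2+u_2(t)^2}$ is a positive $T$-periodic solution of the Ermakov–Pinney equation $\ddot w+V(t)w=w^{-3}$. Moreover, the rotation number $$\rho=\lim_{t\to\infty}\frac{\phi(t)-\phi(0)}{t}$$ of the flow on the torus $\dot\phi=(V(t)+1)+(V(t)-1)\cos\phi$ satisfies $$\rho=\lim_{t\to\infty}\frac{2}{t}\int_0^t\frac{ds}{u_1(s)^2+u_2(s)^2}=\frac{2\theta_H}{T},\qquad \theta_H:=\int_0^T\frac{dt}{w(t)^2}.$$ In particular, for $T=2\pi$, $\rho=\Delta/\pi$ where $\Delta=\int_0^{2\pi}\frac{dt}{u_1(t)^2+u_2(t)^2}$.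
   Context: The monodromy is the linear map $u(t)\mapsto u(t+T)$ on real solutions; it is elliptic if its trace has absolute value $<2$. The equation $\dot\phi=(V+1)+(V-1)\cos\phi$ is the equation satisfied by $\phi=2\arg(u-i\dot u)$ (continuous lift) for solutions $u$ of the Hill equation; $\phi(t)$ is any real-valued solution (the limit exists and is independent of the solution). The quantity $\theta_H$ is the non-adiabatic Hannay angle of the parametric oscillator $H=\tfrac12p^2+\tfrac12V(t)u^2$. *)

theory Defs
  imports "HOL-Analysis.Analysis"
begin

definition hill_sol :: "(real \<Rightarrow> real) \<Rightarrow> (real \<Rightarrow> real) \<Rightarrow> bool" where
  "hill_sol V u \<longleftrightarrow> (\<exists>u'. \<forall>t. (u has_real_derivative u' t) (at t) \<and>
                         (u' has_real_derivative (- V t * u t)) (at t))"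

text \<open>Trace of the monodromy u(t) \<mapsto> u(t+T), computed in the basis of the fundamental
  solutions c (c(0)=1, c'(0)=0) and s (s(0)=0, s'(0)=1): matrix
  [[c T, s T],[c' T, s' T]], trace c T + s' T.\<close>
definition hill_elliptic :: "(real \<Rightarrow> real) \<Rightarrow> real \<Rightarrow> bool" where
  "hill_elliptic V T \<longleftrightarrow> (\<exists>c s. hill_sol V c \<and> hill_sol V s \<and>
       c 0 = 1 \<and> deriv c 0 = 0 \<and> s 0 = 0 \<and> deriv s 0 = 1 \<and>
       \<bar>c T + deriv s T\<bar> < 2)"

definition ermakov_pinney_sol :: "(real \<Rightarrow> real) \<Rightarrow> (real \<Rightarrow> real) \<Rightarrow> bool" where
  "ermakov_pinney_sol V w \<longleftrightarrow> (\<exists>w'. \<forall>t. (w has_real_derivative w' t) (at t) \<and>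
       (w' has_real_derivative (- V t * w t + 1 / (w t) ^ 3)) (at t))"

definition torus_flow_sol :: "(real \<Rightarrow> real) \<Rightarrow> (real \<Rightarrow> real) \<Rightarrow> bool" where
  "torus_flow_sol V \<phi> \<longleftrightarrow> (\<forall>t. (\<phi> has_real_derivative
       ((V t + 1) + (V t - 1) * cos (\<phi> t))) (at t))"

end

theory Submission
  imports Defs
begin

text \<open>Ellipticity makes the monodromy conjugate to a rotation, so there is a pair of solutions
  \<open>u\<^sub>1, u\<^sub>2\<close> with Wronskian 1 on which \<open>t \<mapsto> t + T\<close> acts by a rotation; hence
  \<open>P = u\<^sub>1\<^sup>2 + u\<^sub>2\<^sup>2\<close> is \<open>T\<close>-periodic. With \<open>Q = u\<^sub>1 u\<^sub>1' + u\<^sub>2 u\<^sub>2'\<close> and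
  \<open>R = u\<^sub>1'\<^sup>2 + u\<^sub>2'\<^sup>2\<close> one has \<open>P' = 2Q\<close>, \<open>Q' = R - V P\<close> and \<open>P R - Q\<^sup>2 = 1\<close>, which is exactly
  what makes \<open>w = \<surd>P\<close> an Ermakov-Pinney solution.

  If \<open>\<phi>\<close> solves the torus flow, \<open>\<alpha> = \<phi>/2\<close> solves the Pruefer equation
  \<open>\<alpha>' = V cos\<^sup>2 \<alpha> + sin\<^sup>2 \<alpha>\<close>. The plane vector \<open>(cos \<alpha>, P sin \<alpha> + Q cos \<alpha>)\<close> then turns with
  angular velocity \<open>1/P\<close>, and it never points opposite to \<open>(cos \<alpha>, sin \<alpha>)\<close>; so \<open>\<alpha>(t) - \<alpha>(0)\<close>
  stays within \<open>2\<pi>\<close> of \<open>\<integral>\<^sub>0\<^sup>t 1/P\<close>. The rotation number is therefore the mean value of the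
  periodic function \<open>2/P\<close>, namely \<open>2\<theta>\<^sub>H/T\<close>.\<close>

section \<open>Hill's equation and its monodromy\<close>

definition hill_solution :: "(real \<Rightarrow> real) \<Rightarrow> (real \<Rightarrow> real) \<Rightarrow> (real \<Rightarrow> real) \<Rightarrow> bool" where
  "hill_solution V u u' \<longleftrightarrow>
     (\<forall>t. (u has_real_derivative u' t) (at t) \<and> (u' has_real_derivative - V t * u t) (at t))"

lemma hill_sol_iff_hill_solution: "hill_sol V u \<longleftrightarrow> (\<exists>u'. hill_solution V u u')"
  unfolding hill_sol_def hill_solution_def by blast

lemma hill_solution_deriv: "hill_solution V u u' \<Longrightarrow> deriv u t = u' t"
  unfolding hill_solution_def by (simp add: DERIV_imp_deriv)

lemma hill_solution_wronskian_const:
  assumes "hill_solution V u u'" "hill_solution V v v'"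
  shows "u t * v' t - v t * u' t = u 0 * v' 0 - v 0 * u' 0"
proof -
  have "\<forall>x. ((\<lambda>t. u t * v' t - v t * u' t) has_real_derivative 0) (at x)"
  proof
    fix x
    have "((\<lambda>t. u t * v' t - v t * u' t) has_real_derivative
            u' x * v' x + u x * (- V x * v x) - (v' x * u' x + v x * (- V x * u x))) (at x)"
      using assms unfolding hill_solution_def by (auto intro!: derivative_eq_intros)
    then show "((\<lambda>t. u t * v' t - v t * u' t) has_real_derivative 0) (at x)"
      by (simp add: algebra_simps)
  qed
  then show ?thesis by (rule DERIV_isconst_all)
qed

lemma hill_solution_lincomb:
  assumes "hill_solution V u u'" "hill_solution V v v'"
  shows "hill_solution V (\<lambda>t. a * u t + b * v t) (\<lambda>t. a * u' t + b * v' t)"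
  using assms unfolding hill_solution_def
  by (auto intro!: derivative_eq_intros simp: algebra_simps)

lemma hill_solution_shift:
  assumes "hill_solution V u u'" and "\<And>t. V (t + T) = V t"
  shows "hill_solution V (\<lambda>t. u (t + T)) (\<lambda>t. u' (t + T))"
  unfolding hill_solution_def
proof
  fix t
  have "(u has_real_derivative u' (t + T)) (at (t + T))"
    and "(u' has_real_derivative - V t * u (t + T)) (at (t + T))"
    using assms(1)[unfolded hill_solution_def, rule_format, of "t + T"] assms(2)[of t] by simp_all
  then show "((\<lambda>t. u (t + T)) has_real_derivative u' (t + T)) (at t) \<and>
             ((\<lambda>t. u' (t + T)) has_real_derivative - V t * u (t + T)) (at t)"
    by (simp add: DERIV_shift)
qed

text \<open>The coefficients are read off from Wronskians against \<open>s\<close> and \<open>c\<close>.\<close>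
lemma hill_solution_eq_fundamental:
  assumes u: "hill_solution V u u'" and c: "hill_solution V c c'" and s: "hill_solution V s s'"
    and init: "c 0 = 1" "c' 0 = 0" "s 0 = 0" "s' 0 = 1"
  shows "u t = u 0 * c t + u' 0 * s t" and "u' t = u 0 * c' t + u' 0 * s' t"
proof -
  have cs: "c t * s' t - s t * c' t = 1"
    using hill_solution_wronskian_const[OF c s, of t] init by simp
  have us: "u t * s' t - s t * u' t = u 0"
    using hill_solution_wronskian_const[OF u s, of t] init by simp
  have cu: "c t * u' t - u t * c' t = u' 0"
    using hill_solution_wronskian_const[OF c u, of t] init by simp
  have "u t = u t * (c t * s' t - s t * c' t)" using cs by simp
  also have "\<dots> = (u t * s' t - s t * u' t) * c t + (c t * u' t - u t * c' t) * s t"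
    by (simp add: algebra_simps)
  finally show "u t = u 0 * c t + u' 0 * s t" using us cu by simp
  have "u' t = u' t * (c t * s' t - s t * c' t)" using cs by simp
  also have "\<dots> = (u t * s' t - s t * u' t) * c' t + (c t * u' t - u t * c' t) * s' t"
    by (simp add: algebra_simps)
  finally show "u' t = u 0 * c' t + u' 0 * s' t" using us cu by simp
qed

lemma sl2_elliptic_rotation_basis:
  fixes a b e d :: real
  assumes det: "a * d - b * e = 1" and elliptic: "\<bar>a + d\<bar> < 2"
  obtains x1 y1 x2 y2 C S where "x1 * y2 - x2 * y1 = 1" "C\<^sup>2 + S\<^sup>2 = 1"
    "a * x1 + b * y1 = C * x1 - S * x2" "e * x1 + d * y1 = C * y1 - S * y2"
    "a * x2 + b * y2 = S * x1 + C * x2" "e * x2 + d * y2 = S * y1 + C * y2"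
proof -
  define C where "C = (a + d) / 2"
  have "C\<^sup>2 < 1"
  proof -
    have "\<bar>C\<bar> < 1" using elliptic unfolding C_def by simp
    then show ?thesis by (simp add: abs_square_less_1)
  qed
  have "b \<noteq> 0"
  proof
    assume "b = 0"
    then have "C\<^sup>2 - 1 = ((a - d) / 2)\<^sup>2"
      using det unfolding C_def by (simp add: power2_eq_square field_simps)
    with \<open>C\<^sup>2 < 1\<close> show False by (metis diff_less_0_iff_less not_less zero_le_power2)
  qed
  define S where "S = sgn b * sqrt (1 - C\<^sup>2)"
  have CS: "C\<^sup>2 + S\<^sup>2 = 1"
    using \<open>C\<^sup>2 < 1\<close> \<open>b \<noteq> 0\<close> unfolding S_def by (simp add: power_mult_distrib sgn_if)
  have "b * S > 0"
  proof -
    have "b * S = \<bar>b\<bar> * sqrt (1 - C\<^sup>2)" unfolding S_def by (simp add: sgn_if)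
    then show ?thesis using \<open>C\<^sup>2 < 1\<close> \<open>b \<noteq> 0\<close> by simp
  qed
  define k where "k = 1 / sqrt (b * S)"
  have k2: "k * k * (b * S) = 1"
  proof -
    have "k * k * (b * S) = (b * S) / (sqrt (b * S) * sqrt (b * S))" unfolding k_def by simp
    also have "sqrt (b * S) * sqrt (b * S) = b * S" using \<open>b * S > 0\<close> by simp
    also have "(b * S) / (b * S) = 1" using \<open>b * S > 0\<close> by (intro divide_self) linarith
    finally show ?thesis .
  qed
  have W: "(k * b) * (k * S) - 0 * (k * (C - a)) = 1" using k2 by (simp add: algebra_simps)
  have M1: "a * (k * b) + b * (k * (C - a)) = C * (k * b) - S * 0" by (simp add: algebra_simps)
  have "e * (k * b) + d * (k * (C - a)) = k * (b * e + C * d - a * d)"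
    by (simp add: algebra_simps)
  also have "\<dots> = k * (C * d - 1)"
    using det by (simp add: algebra_simps)
  also have "\<dots> = k * (C * (2 * C - a) - (C\<^sup>2 + S\<^sup>2))"
    using CS unfolding C_def by (simp add: field_simps)
  also have "\<dots> = C * (k * (C - a)) - S * (k * S)"
    by (simp add: algebra_simps power2_eq_square)
  finally have M2: "e * (k * b) + d * (k * (C - a)) = C * (k * (C - a)) - S * (k * S)" .
  have M3: "a * 0 + b * (k * S) = S * (k * b) + C * 0" by simp
  have "S * (k * (C - a)) + C * (k * S) = (2 * C - a) * (k * S)" by (simp add: algebra_simps)
  also have "2 * C - a = d" unfolding C_def by (simp add: field_simps)
  finally have M4: "e * 0 + d * (k * S) = S * (k * (C - a)) + C * (k * S)" by simp
  show thesis by (rule that[OF W CS M1 M2 M3 M4])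
qed

lemma hill_solution_monodromy:
  assumes u: "hill_solution V u u'" and c: "hill_solution V c c'" and s: "hill_solution V s s'"
    and init: "c 0 = 1" "c' 0 = 0" "s 0 = 0" "s' 0 = 1"
    and per: "\<And>t. V (t + T) = V t"
  shows "u (t + T) = u T * c t + u' T * s t"
  using hill_solution_eq_fundamental(1)[OF hill_solution_shift[OF u per] c s init] by simp

lemma hill_elliptic_periodic_amplitude:
  assumes "hill_elliptic V T" and per: "\<And>t. V (t + T) = V t"
  obtains u1 u1' u2 u2' where "hill_solution V u1 u1'" "hill_solution V u2 u2'"
    "\<And>t. u1 t * u2' t - u2 t * u1' t = 1"
    "\<And>t. (u1 (t + T))\<^sup>2 + (u2 (t + T))\<^sup>2 = (u1 t)\<^sup>2 + (u2 t)\<^sup>2"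
proof -
  obtain c s where "hill_sol V c" "hill_sol V s"
    and init0: "c 0 = 1" "deriv c 0 = 0" "s 0 = 0" "deriv s 0 = 1"
    and trace: "\<bar>c T + deriv s T\<bar> < 2"
    using assms(1) unfolding hill_elliptic_def by blast
  then obtain c' s' where c: "hill_solution V c c'" and s: "hill_solution V s s'"
    unfolding hill_sol_iff_hill_solution by blast
  note deriv_cs = hill_solution_deriv[OF c] hill_solution_deriv[OF s]
  have init: "c 0 = 1" "c' 0 = 0" "s 0 = 0" "s' 0 = 1"
    using init0 deriv_cs by simp_all
  have "c T * s' T - s T * c' T = 1"
    using hill_solution_wronskian_const[OF c s, of T] init by simp
  moreover have "\<bar>c T + s' T\<bar> < 2" using trace deriv_cs by simp
  ultimately obtain x1 y1 x2 y2 C S where W: "x1 * y2 - x2 * y1 = 1" and CS: "C\<^sup>2 + S\<^sup>2 = 1"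
    and M: "c T * x1 + s T * y1 = C * x1 - S * x2" "c' T * x1 + s' T * y1 = C * y1 - S * y2"
      "c T * x2 + s T * y2 = S * x1 + C * x2" "c' T * x2 + s' T * y2 = S * y1 + C * y2"
    by (rule sl2_elliptic_rotation_basis)
  define u1 u1' u2 u2' where "u1 = (\<lambda>t. x1 * c t + y1 * s t)" "u1' = (\<lambda>t. x1 * c' t + y1 * s' t)"
    "u2 = (\<lambda>t. x2 * c t + y2 * s t)" "u2' = (\<lambda>t. x2 * c' t + y2 * s' t)"
  have u1: "hill_solution V u1 u1'" and u2: "hill_solution V u2 u2'"
    unfolding u1_u1'_u2_u2'_def by (intro hill_solution_lincomb[OF c s])+
  have "u1 t * u2' t - u2 t * u1' t = 1" for t
    using hill_solution_wronskian_const[OF u1 u2, of t] init W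
    unfolding u1_u1'_u2_u2'_def by (simp add: algebra_simps)
  moreover have "(u1 (t + T))\<^sup>2 + (u2 (t + T))\<^sup>2 = (u1 t)\<^sup>2 + (u2 t)\<^sup>2" for t
  proof -
    have shift: "x * c (t + T) + y * s (t + T) = (c T * x + s T * y) * c t + (c' T * x + s' T * y) * s t"
      for x y
      using hill_solution_monodromy[OF hill_solution_lincomb[OF c s, where a = x and b = y] c s init per, of t]
      by (simp add: algebra_simps)
    have rotation: "u1 (t + T) = C * u1 t - S * u2 t" "u2 (t + T) = S * u1 t + C * u2 t"
      unfolding u1_u1'_u2_u2'_def shift M by (simp_all add: algebra_simps)
    have "(u1 (t + T))\<^sup>2 + (u2 (t + T))\<^sup>2 = (C\<^sup>2 + S\<^sup>2) * ((u1 t)\<^sup>2 + (u2 t)\<^sup>2)"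
      unfolding rotation by (simp add: power2_eq_square algebra_simps)
    then show ?thesis using CS by simp
  qed
  ultimately show thesis using that u1 u2 by blast
qed

section \<open>Averages of periodic functions\<close>

lemma continuous_on_indefinite_integral:
  fixes f :: "real \<Rightarrow> real"
  assumes "continuous_on UNIV f"
  shows "continuous_on {a..b} (\<lambda>t. integral {a..t} f)"
  using assms by (intro indefinite_integral_continuous_1 integrable_continuous_interval)
    (auto intro: continuous_on_subset)

lemma indefinite_integral_has_real_derivative:
  fixes f :: "real \<Rightarrow> real"
  assumes "continuous_on UNIV f" and "a < x"
  shows "((\<lambda>t. integral {a..t} f) has_real_derivative f x) (at x)"
proof -
  have "((\<lambda>t. integral {a..t} f) has_real_derivative f x) (at x within {a..x + 1})"
    using assms by (intro integral_has_real_derivative) (auto intro: continuous_on_subset)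
  moreover have "at x within {a..x + 1} = at x"
    using assms(2) by (intro at_within_Icc_at) auto
  ultimately show ?thesis by simp
qed

lemma integral_periodic_shift:
  fixes f :: "real \<Rightarrow> real"
  assumes "continuous_on UNIV f" and per: "\<And>t. f (t + T) = f t" and "T \<ge> 0" "t \<ge> 0"
  shows "integral {0..t + T} f = integral {0..T} f + integral {0..t} f"
proof -
  have "f integrable_on {0..t + T}"
    using assms(1) by (intro integrable_continuous_interval) (auto intro: continuous_on_subset)
  then have "integral {0..T} f + integral {T..t + T} f = integral {0..t + T} f"
    using Henstock_Kurzweil_Integration.integral_combine[where a = 0 and c = T and b = "t + T"] assms(3,4)
    by simp
  moreover have "integral {T..t + T} f = integral {0..t} f"
  proof -
    have "f \<circ> (+) T = f" using per by (auto simp: fun_eq_iff add.commute)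
    then show ?thesis using integral_shift_Icc_real[of 0 t f T] by simp
  qed
  ultimately show ?thesis by simp
qed

lemma bounded_div_tendsto_0_at_top:
  fixes h :: "real \<Rightarrow> real"
  assumes "\<And>t. t \<ge> 0 \<Longrightarrow> \<bar>h t\<bar> \<le> B"
  shows "((\<lambda>t. h t / t) \<longlongrightarrow> 0) at_top"
proof (rule Lim_null_comparison)
  show "\<forall>\<^sub>F t in at_top. norm (h t / t) \<le> B / t"
    using eventually_gt_at_top[of 0]
    by eventually_elim (use assms in \<open>auto simp: abs_divide divide_right_mono\<close>)
  show "((\<lambda>t. B / t) \<longlongrightarrow> 0) at_top"
    by (intro tendsto_divide_0[OF tendsto_const] filterlim_at_top_imp_at_infinity filterlim_ident)
qed

lemma periodic_on_nonneg_bounded: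
  fixes h :: "real \<Rightarrow> real"
  assumes cont: "continuous_on {0..T} h" and "T > 0" and per: "\<And>t. t \<ge> 0 \<Longrightarrow> h (t + T) = h t"
  obtains B where "\<And>t. t \<ge> 0 \<Longrightarrow> \<bar>h t\<bar> \<le> B"
proof -
  obtain B where "\<forall>y \<in> h ` {0..T}. norm y \<le> B"
    using compact_imp_bounded[OF compact_continuous_image[OF cont compact_Icc]] bounded_iff by metis
  then have B: "\<And>r. r \<in> {0..T} \<Longrightarrow> \<bar>h r\<bar> \<le> B" by auto
  have shift: "h (r + real n * T) = h r" if "r \<ge> 0" for r n
  proof (induction n)
    case (Suc n)
    have "h (r + real (Suc n) * T) = h ((r + real n * T) + T)" by (simp add: algebra_simps)
    also have "\<dots> = h (r + real n * T)" using that \<open>T > 0\<close> by (intro per) auto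
    finally show ?case using Suc by simp
  qed simp
  have "\<bar>h t\<bar> \<le> B" if "t \<ge> 0" for t
  proof -
    define n where "n = nat \<lfloor>t / T\<rfloor>"
    have n: "real n = \<lfloor>t / T\<rfloor>" unfolding n_def using that \<open>T > 0\<close> by simp
    have fl: "of_int \<lfloor>t / T\<rfloor> \<le> t / T" "t / T < of_int \<lfloor>t / T\<rfloor> + 1" by linarith+
    have "real n * T \<le> t"
      using mult_right_mono[OF fl(1), of T] n \<open>T > 0\<close> by simp
    moreover have "t < real n * T + T"
      using mult_strict_right_mono[OF fl(2) \<open>T > 0\<close>] n \<open>T > 0\<close> by (simp add: algebra_simps)
    ultimately
    have "h t = h (t - real n * T)" and "t - real n * T \<in> {0..T}"
      using shift[of "t - real n * T" n] by auto
    then show ?thesis using B by simp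
  qed
  then show thesis by (rule that)
qed

lemma periodic_integral_average_tendsto:
  fixes f :: "real \<Rightarrow> real"
  assumes cont: "continuous_on UNIV f" and per: "\<And>t. f (t + T) = f t" and "T > 0"
  shows "((\<lambda>t. integral {0..t} f / t) \<longlongrightarrow> integral {0..T} f / T) at_top"
proof -
  define \<theta> where "\<theta> = integral {0..T} f"
  define h where "h t = integral {0..t} f - t * \<theta> / T" for t
  have "continuous_on {0..T} h"
    unfolding h_def using \<open>T > 0\<close>
    by (intro continuous_intros continuous_on_indefinite_integral[OF cont]) auto
  moreover have "h (t + T) = h t" if "t \<ge> 0" for t
    unfolding h_def \<theta>_def using integral_periodic_shift[OF cont per _ that] \<open>T > 0\<close>
    by (simp add: field_simps)
  ultimately obtain B where "\<And>t. t \<ge> 0 \<Longrightarrow> \<bar>h t\<bar> \<le> B"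
    using periodic_on_nonneg_bounded \<open>T > 0\<close> by blast
  then have "((\<lambda>t. \<theta> / T + h t / t) \<longlongrightarrow> \<theta> / T + 0) at_top"
    by (intro tendsto_intros bounded_div_tendsto_0_at_top)
  moreover have "\<forall>\<^sub>F t in at_top. \<theta> / T + h t / t = integral {0..t} f / t"
    using eventually_gt_at_top[of 0] by eventually_elim (simp add: h_def field_simps)
  ultimately show ?thesis unfolding \<theta>_def by (simp add: tendsto_cong)
qed

section \<open>Polar angle of a plane curve\<close>

lemma normalized_rotated_component_has_derivative_0:
  fixes p q X :: "real \<Rightarrow> real"
  assumes dp: "(p has_real_derivative dp) (at x)" and dq: "(q has_real_derivative dq) (at x)"
    and dX: "(X has_real_derivative dX) (at x)"
    and pos: "(p x)\<^sup>2 + (q x)\<^sup>2 > 0"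
    and angular: "dX * ((p x)\<^sup>2 + (q x)\<^sup>2) = p x * dq - q x * dp"
  shows "((\<lambda>t. (p t * cos (X t) + q t * sin (X t)) / sqrt ((p t)\<^sup>2 + (q t)\<^sup>2))
           has_real_derivative 0) (at x)"
proof -
  define c s D where "c = cos (X x)" "s = sin (X x)" "D = sqrt ((p x)\<^sup>2 + (q x)\<^sup>2)"
  define J J' N' where "J = p x * c + q x * s" "J' = dp * c + dq * s + dX * (q x * c - p x * s)"
    "N' = p x * dp + q x * dq"
  have "D > 0" and DD: "D * D = (p x)\<^sup>2 + (q x)\<^sup>2"
    using pos unfolding c_s_D_def by simp_all
  have num: "((\<lambda>t. p t * cos (X t) + q t * sin (X t)) has_real_derivative J') (at x)"
    using dp dq dX unfolding c_s_D_def J_J'_N'_def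
    by (auto intro!: derivative_eq_intros simp: algebra_simps)
  have "((\<lambda>t. sqrt ((p t)\<^sup>2 + (q t)\<^sup>2)) has_real_derivative inverse D / 2 * (2 * N')) (at x)"
    using pos dp dq unfolding c_s_D_def J_J'_N'_def
    by (intro DERIV_chain2[OF DERIV_real_sqrt] derivative_eq_intros) (auto simp: power2_eq_square)
  then have den: "((\<lambda>t. sqrt ((p t)\<^sup>2 + (q t)\<^sup>2)) has_real_derivative N' / D) (at x)"
    by (rule DERIV_cong) (simp add: inverse_eq_divide)
  have "J' * (D * D) - J * N'
        = (dp * c + dq * s) * (D * D) + (q x * c - p x * s) * (dX * (D * D)) - J * N'"
    unfolding J_J'_N'_def by (simp add: algebra_simps)
  also have "\<dots> = (dp * c + dq * s) * ((p x)\<^sup>2 + (q x)\<^sup>2)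
                   + (q x * c - p x * s) * (p x * dq - q x * dp) - J * N'"
    by (simp only: DD angular)
  also have "\<dots> = 0"
    unfolding J_J'_N'_def by (simp add: algebra_simps power2_eq_square)
  finally have "J' * (D * D) - J * N' = 0" .
  moreover have "J' * D - J * (N' / D) = (J' * (D * D) - J * N') / D"
    using \<open>D > 0\<close> by (simp add: field_simps)
  ultimately have quotient_zero: "(J' * D - J * (N' / D)) / (D * D) = 0" by simp
  have "sqrt ((p x)\<^sup>2 + (q x)\<^sup>2) \<noteq> 0" using \<open>D > 0\<close> unfolding c_s_D_def by linarith
  from DERIV_divide[OF num den this] show ?thesis
    unfolding c_s_D_def[symmetric] J_J'_N'_def[symmetric] quotient_zero .
qed

lemma rotated_component_const:
  fixes p q X p' q' X' :: "real \<Rightarrow> real"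
  assumes dp: "\<And>t. (p has_real_derivative p' t) (at t)"
    and dq: "\<And>t. (q has_real_derivative q' t) (at t)"
    and pos: "\<And>t. (p t)\<^sup>2 + (q t)\<^sup>2 > 0"
    and cont_X: "continuous_on {0..b} X"
    and dX: "\<And>t. t > 0 \<Longrightarrow> (X has_real_derivative X' t) (at t)"
    and angular: "\<And>t. X' t * ((p t)\<^sup>2 + (q t)\<^sup>2) = p t * q' t - q t * p' t"
    and "0 \<le> t" "t \<le> b"
  shows "(p t * cos (X t) + q t * sin (X t)) / sqrt ((p t)\<^sup>2 + (q t)\<^sup>2)
           = (p 0 * cos (X 0) + q 0 * sin (X 0)) / sqrt ((p 0)\<^sup>2 + (q 0)\<^sup>2)"
proof -
  have cont_pq: "continuous_on UNIV p" "continuous_on UNIV q"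
    using dp dq by (auto intro!: DERIV_continuous_on)
  moreover have "sqrt ((p s)\<^sup>2 + (q s)\<^sup>2) \<noteq> 0" for s
  proof -
    have "sqrt ((p s)\<^sup>2 + (q s)\<^sup>2) > 0" using pos[of s] by simp
    then show ?thesis by linarith
  qed
  ultimately have "continuous_on {0..b}
      (\<lambda>t. (p t * cos (X t) + q t * sin (X t)) / sqrt ((p t)\<^sup>2 + (q t)\<^sup>2))"
    using cont_X by (auto intro!: continuous_intros intro: continuous_on_subset)
  moreover have "((\<lambda>t. (p t * cos (X t) + q t * sin (X t)) / sqrt ((p t)\<^sup>2 + (q t)\<^sup>2))
      has_real_derivative 0) (at s)" if "0 < s" for s
    using normalized_rotated_component_has_derivative_0[OF dp dq dX[OF that] pos angular] .
  ultimately show ?thesis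
    using \<open>0 \<le> t\<close> \<open>t \<le> b\<close> by (cases "t = 0") (auto intro: DERIV_isconst2[of 0 b])
qed

lemma aligned_if_inner_eq_norm:
  fixes p q c s :: real
  assumes cs: "c\<^sup>2 + s\<^sup>2 = 1" and inner: "p * c + q * s = sqrt (p\<^sup>2 + q\<^sup>2)"
  shows "p = sqrt (p\<^sup>2 + q\<^sup>2) * c" and "q = sqrt (p\<^sup>2 + q\<^sup>2) * s"
proof -
  define J K where "J = p * c + q * s" "K = q * c - p * s"
  have "J\<^sup>2 + K\<^sup>2 = (p\<^sup>2 + q\<^sup>2) * (c\<^sup>2 + s\<^sup>2)"
    unfolding J_K_def by (simp add: algebra_simps power2_eq_square)
  moreover have "J\<^sup>2 = p\<^sup>2 + q\<^sup>2" unfolding J_K_def inner by simp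
  ultimately have "K = 0" using cs by simp
  have "p = p * (c\<^sup>2 + s\<^sup>2)" "q = q * (c\<^sup>2 + s\<^sup>2)" using cs by simp_all
  then have "p = J * c - K * s" "q = J * s + K * c"
    unfolding J_K_def by (simp_all add: algebra_simps power2_eq_square)
  then show "p = sqrt (p\<^sup>2 + q\<^sup>2) * c" and "q = sqrt (p\<^sup>2 + q\<^sup>2) * s"
    using \<open>K = 0\<close> unfolding J_K_def inner by simp_all
qed

text \<open>Hypothesis \<open>angular\<close> says that \<open>X'\<close> is the angular velocity of the plane curve \<open>(p, q)\<close>.\<close>
lemma polar_form_of_angular_velocity:
  fixes p q X p' q' X' :: "real \<Rightarrow> real"
  assumes dp: "\<And>t. (p has_real_derivative p' t) (at t)"
    and dq: "\<And>t. (q has_real_derivative q' t) (at t)"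
    and pos: "\<And>t. (p t)\<^sup>2 + (q t)\<^sup>2 > 0"
    and cont_X: "\<And>b. continuous_on {0..b} X"
    and dX: "\<And>t. t > 0 \<Longrightarrow> (X has_real_derivative X' t) (at t)"
    and angular: "\<And>t. X' t * ((p t)\<^sup>2 + (q t)\<^sup>2) = p t * q' t - q t * p' t"
  obtains x0 where
    "\<And>t. t \<ge> 0 \<Longrightarrow> p t = sqrt ((p t)\<^sup>2 + (q t)\<^sup>2) * cos (x0 + X t)"
    "\<And>t. t \<ge> 0 \<Longrightarrow> q t = sqrt ((p t)\<^sup>2 + (q t)\<^sup>2) * sin (x0 + X t)"
proof -
  define D where "D t = sqrt ((p t)\<^sup>2 + (q t)\<^sup>2)" for t
  have D: "D t > 0" "D t * D t = (p t)\<^sup>2 + (q t)\<^sup>2" for t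
    using pos[of t] unfolding D_def by simp_all
  have "(p 0 / D 0)\<^sup>2 + (q 0 / D 0)\<^sup>2 = ((p 0)\<^sup>2 + (q 0)\<^sup>2) / (D 0 * D 0)"
    by (simp add: power_divide add_divide_distrib power2_eq_square)
  also have "\<dots> = 1" unfolding D(2)[symmetric] using D(1)[of 0] by simp
  finally obtain y where y: "p 0 / D 0 = cos y" "q 0 / D 0 = sin y"
    by (rule sincos_total_2pi)
  define x0 where "x0 = y - X 0"
  have "x0 + X 0 = y" unfolding x0_def by simp
  then have "(p 0 * cos (x0 + X 0) + q 0 * sin (x0 + X 0)) / D 0
               = (p 0 * (p 0 / D 0) + q 0 * (q 0 / D 0)) / D 0"
    unfolding y by simp
  also have "\<dots> = ((p 0)\<^sup>2 + (q 0)\<^sup>2) / (D 0 * D 0)"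
    by (simp add: add_divide_distrib power2_eq_square)
  also have "\<dots> = 1" unfolding D(2)[symmetric] using D(1)[of 0] by simp
  finally have at_0: "(p 0 * cos (x0 + X 0) + q 0 * sin (x0 + X 0)) / D 0 = 1" .
  have along: "p t * cos (x0 + X t) + q t * sin (x0 + X t) = D t" if "t \<ge> 0" for t
  proof -
    have cont: "continuous_on {0..t} (\<lambda>t. x0 + X t)" using cont_X by (intro continuous_intros)
    have deriv: "((\<lambda>t. x0 + X t) has_real_derivative X' s) (at s)" if "s > 0" for s
      using dX[OF that] by (auto intro!: derivative_eq_intros)
    have "(p t * cos (x0 + X t) + q t * sin (x0 + X t)) / D t
        = (p 0 * cos (x0 + X 0) + q 0 * sin (x0 + X 0)) / D 0"
      unfolding D_def by (rule rotated_component_const[OF dp dq pos cont deriv angular \<open>t \<ge> 0\<close> order.refl])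
    also note at_0
    finally show ?thesis using D(1)[of t] by simp
  qed
  show thesis
  proof (rule that)
    fix t :: real
    assume "t \<ge> 0"
    have "(cos (x0 + X t))\<^sup>2 + (sin (x0 + X t))\<^sup>2 = 1" by simp
    from aligned_if_inner_eq_norm[OF this along[OF \<open>t \<ge> 0\<close>, unfolded D_def]]
    show "p t = sqrt ((p t)\<^sup>2 + (q t)\<^sup>2) * cos (x0 + X t)"
      and "q t = sqrt ((p t)\<^sup>2 + (q t)\<^sup>2) * sin (x0 + X t)" .
  qed
qed

lemma cos_ne_minus_one_drift_less:
  fixes d :: "real \<Rightarrow> real"
  assumes cont: "\<And>b. continuous_on {0..b} d" and ne: "\<And>t. t \<ge> 0 \<Longrightarrow> cos (d t) \<noteq> -1"
    and "t \<ge> 0"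
  shows "\<bar>d t - d 0\<bar> < 2 * pi"
proof -
  have up: "f t < f 0 + 2 * pi"
    if cont: "\<And>b. continuous_on {0..b} f" and ne: "\<And>t. t \<ge> 0 \<Longrightarrow> cos (f t) \<noteq> -1"
      and "t \<ge> 0" for f :: "real \<Rightarrow> real" and t
  proof (rule ccontr)
    assume "\<not> f t < f 0 + 2 * pi"
    define m where "m = \<lceil>(f 0 - pi) / (2 * pi)\<rceil>"
    define c where "c = (2 * of_int m + 1) * pi"
    have "(f 0 - pi) / (2 * pi) \<le> of_int m" "of_int m < (f 0 - pi) / (2 * pi) + 1"
      unfolding m_def by linarith+
    then have "f 0 \<le> c" "c < f 0 + 2 * pi"
      unfolding c_def by (simp_all add: field_simps)
    with \<open>\<not> f t < f 0 + 2 * pi\<close> obtain s where "0 \<le> s" "f s = c"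
      using IVT'[of f 0 c t] cont \<open>t \<ge> 0\<close> by force
    moreover have "cos c = -1" unfolding c_def cos_eq_minus1 by blast
    ultimately show False using ne by auto
  qed
  have "d t < d 0 + 2 * pi" using up[OF cont ne \<open>t \<ge> 0\<close>] .
  moreover have "- d t < - d 0 + 2 * pi"
    using up[of "\<lambda>t. - d t"] cont ne \<open>t \<ge> 0\<close> by (auto intro: continuous_intros)
  ultimately show ?thesis by linarith
qed

section \<open>Ermakov invariants and the torus flow\<close>

text \<open>\<open>P\<close>, \<open>Q\<close>, \<open>R\<close> stand for \<open>w\<^sup>2\<close>, \<open>w w'\<close> and \<open>w'\<^sup>2 + w\<^sup>-\<^sup>2\<close>; \<open>P R - Q\<^sup>2 = 1\<close> is the Ermakov invariant.\<close>
locale ermakov_data =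
  fixes V P Q R :: "real \<Rightarrow> real"
  assumes P_deriv: "\<And>t. (P has_real_derivative 2 * Q t) (at t)"
    and Q_deriv: "\<And>t. (Q has_real_derivative R t - V t * P t) (at t)"
    and P_pos: "\<And>t. P t > 0"
    and ermakov_invariant: "\<And>t. P t * R t - (Q t)\<^sup>2 = 1"

lemma ermakov_data_of_wronskian_pair:
  assumes u1: "hill_solution V u1 u1'" and u2: "hill_solution V u2 u2'"
    and W: "\<And>t. u1 t * u2' t - u2 t * u1' t = 1"
  shows "ermakov_data V (\<lambda>t. (u1 t)\<^sup>2 + (u2 t)\<^sup>2) (\<lambda>t. u1 t * u1' t + u2 t * u2' t)
           (\<lambda>t. (u1' t)\<^sup>2 + (u2' t)\<^sup>2)"
proof
  fix t
  show "((\<lambda>t. (u1 t)\<^sup>2 + (u2 t)\<^sup>2) has_real_derivative 2 * (u1 t * u1' t + u2 t * u2' t)) (at t)"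
    using u1 u2 unfolding hill_solution_def by (auto intro!: derivative_eq_intros simp: algebra_simps)
  show "((\<lambda>t. u1 t * u1' t + u2 t * u2' t) has_real_derivative
          (u1' t)\<^sup>2 + (u2' t)\<^sup>2 - V t * ((u1 t)\<^sup>2 + (u2 t)\<^sup>2)) (at t)"
    using u1 u2 unfolding hill_solution_def
    by (auto intro!: derivative_eq_intros simp: algebra_simps power2_eq_square)
  have "u1 t \<noteq> 0 \<or> u2 t \<noteq> 0" using W[of t] by auto
  then show "(u1 t)\<^sup>2 + (u2 t)\<^sup>2 > 0" by (simp add: sum_power2_gt_zero_iff)
  have "((u1 t)\<^sup>2 + (u2 t)\<^sup>2) * ((u1' t)\<^sup>2 + (u2' t)\<^sup>2) - (u1 t * u1' t + u2 t * u2' t)\<^sup>2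
          = (u1 t * u2' t - u2 t * u1' t)\<^sup>2"
    by (simp add: algebra_simps power2_eq_square)
  then show "((u1 t)\<^sup>2 + (u2 t)\<^sup>2) * ((u1' t)\<^sup>2 + (u2' t)\<^sup>2) - (u1 t * u1' t + u2 t * u2' t)\<^sup>2 = 1"
    using W[of t] by simp
qed

lemma torus_flow_sol_half_angle:
  assumes "torus_flow_sol V \<phi>"
  shows "((\<lambda>t. \<phi> t / 2) has_real_derivative
           V t * (cos (\<phi> t / 2))\<^sup>2 + (sin (\<phi> t / 2))\<^sup>2) (at t)"
proof -
  have "(\<phi> has_real_derivative (V t + 1) + (V t - 1) * cos (\<phi> t)) (at t)"
    using assms unfolding torus_flow_sol_def by blast
  then have "((\<lambda>t. \<phi> t / 2) has_real_derivative ((V t + 1) + (V t - 1) * cos (\<phi> t)) / 2) (at t)"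
    by (rule DERIV_cdivide)
  moreover have "((V t + 1) + (V t - 1) * cos (\<phi> t)) / 2
                   = V t * (cos (\<phi> t / 2))\<^sup>2 + (sin (\<phi> t / 2))\<^sup>2"
  proof -
    have double: "cos (\<phi> t) = (cos (\<phi> t / 2))\<^sup>2 - (sin (\<phi> t / 2))\<^sup>2"
      using cos_double[of "\<phi> t / 2"] by simp
    show ?thesis unfolding double sin_squared_eq by (simp add: field_simps)
  qed
  ultimately show ?thesis by simp
qed

lemma prufer_companion_angular_identity:
  fixes P Q R V c s :: real
  assumes cs: "c\<^sup>2 + s\<^sup>2 = 1" and invariant: "P * R - Q\<^sup>2 = 1" and "P > 0"
  shows "1 / P * (c\<^sup>2 + (P * s + Q * c)\<^sup>2)
    = c * (2 * Q * s + P * c * (V * c\<^sup>2 + s\<^sup>2) + (R - V * P) * c - Q * s * (V * c\<^sup>2 + s\<^sup>2))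
      - (P * s + Q * c) * (- s * (V * c\<^sup>2 + s\<^sup>2))"
proof -
  have "c * (2 * Q * s + P * c * (V * c\<^sup>2 + s\<^sup>2) + (R - V * P) * c - Q * s * (V * c\<^sup>2 + s\<^sup>2))
          - (P * s + Q * c) * (- s * (V * c\<^sup>2 + s\<^sup>2))
        = 2 * Q * s * c + (R - V * P) * c\<^sup>2 + P * (V * c\<^sup>2 + s\<^sup>2) * (c\<^sup>2 + s\<^sup>2)"
    by (simp add: algebra_simps power2_eq_square)
  also have "\<dots> = (P * R * c\<^sup>2 + 2 * P * Q * s * c + (P * s)\<^sup>2) / P"
    unfolding cs using \<open>P > 0\<close> by (simp add: field_simps power2_eq_square)
  also have "\<dots> = 1 / P * (c\<^sup>2 + (P * s + Q * c)\<^sup>2)"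
    using invariant by (simp add: field_simps power2_eq_square)
  finally show ?thesis ..
qed

lemma cos_diff_ne_minus_one_if_aligned:
  fixes a y \<rho> P Q :: real
  assumes "\<rho> > 0" "P > 0" and cos_a: "cos a = \<rho> * cos y"
    and sin_a: "P * sin a + Q * cos a = \<rho> * sin y"
  shows "cos (a - y) \<noteq> -1"
proof
  assume "cos (a - y) = -1"
  then have "cos a * cos y + sin a * sin y = -1" by (simp add: cos_diff)
  moreover have "(x + u)\<^sup>2 + (z + v)\<^sup>2 = (x\<^sup>2 + z\<^sup>2) + (u\<^sup>2 + v\<^sup>2) + 2 * (x * u + z * v)"
    for x u z v :: real
    by (simp add: power2_eq_square algebra_simps)
  ultimately have "(cos a + cos y)\<^sup>2 + (sin a + sin y)\<^sup>2 = 0" by simp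
  then have "cos a + cos y = 0 \<and> sin a + sin y = 0" by (simp only: sum_power2_eq_zero_iff)
  then have opposite: "cos a = - cos y" "sin a = - sin y" by linarith+
  then have "\<rho> * cos y = - cos y" using cos_a by linarith
  then have "cos y * (\<rho> + 1) = 0" by (simp add: algebra_simps)
  with \<open>\<rho> > 0\<close> have "cos y = 0" by simp
  then have "P * sin a + Q * cos a = - (P * sin y)" using opposite by simp
  then have "sin y * (\<rho> + P) = 0" using sin_a by (simp add: algebra_simps)
  with \<open>\<rho> > 0\<close> \<open>P > 0\<close> have "sin y = 0" by (simp add: add_pos_pos)
  with \<open>cos y = 0\<close> show False using sin_cos_squared_add[of y] by simp
qed

context ermakov_data
begin

lemma continuous_on_inverse_P: "continuous_on UNIV (\<lambda>t. 1 / P t)"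
proof -
  have "continuous_on UNIV P" using P_deriv by (auto intro!: DERIV_continuous_on)
  moreover have "P t \<noteq> 0" for t using P_pos[of t] by simp
  ultimately show ?thesis by (intro continuous_intros) auto
qed

lemma ermakov_pinney_sqrt: "ermakov_pinney_sol V (\<lambda>t. sqrt (P t))"
  unfolding ermakov_pinney_sol_def
proof (intro exI allI conjI)
  fix t
  define w where "w = sqrt (P t)"
  have "w > 0" and P_w: "P t = w * w" using P_pos[of t] unfolding w_def by simp_all
  show "((\<lambda>t. sqrt (P t)) has_real_derivative Q t / sqrt (P t)) (at t)"
    using P_deriv[of t] P_pos[of t] \<open>w > 0\<close> unfolding w_def
    by (auto intro!: derivative_eq_intros simp: field_simps)
  have "((\<lambda>t. Q t / sqrt (P t)) has_real_derivative
      ((R t - V t * P t) * w - Q t * (inverse w / 2 * (2 * Q t))) / (w * w)) (at t)"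
    unfolding w_def
    by (rule DERIV_divide[OF Q_deriv DERIV_chain2[OF DERIV_real_sqrt[OF P_pos] P_deriv]])
      (use P_pos[of t] in simp)
  moreover have "((R t - V t * P t) * w - Q t * (inverse w / 2 * (2 * Q t))) / (w * w)
      = (P t * R t - (Q t)\<^sup>2) / w ^ 3 - V t * w"
    unfolding P_w using \<open>w > 0\<close> by (simp add: field_simps power2_eq_square power3_eq_cube)
  ultimately show "((\<lambda>t. Q t / sqrt (P t)) has_real_derivative
      - V t * sqrt (P t) + 1 / (sqrt (P t)) ^ 3) (at t)"
    unfolding ermakov_invariant w_def by simp
qed

text \<open>For a solution \<open>\<alpha>\<close> of the Pruefer equation, the companion vector
  \<open>(cos \<alpha>, P sin \<alpha> + Q cos \<alpha>)\<close> turns with angular velocity \<open>1/P\<close>, just like \<open>u\<^sub>1 + i u\<^sub>2\<close>.\<close>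
lemma prufer_companion_polar_form:
  assumes phase: "\<And>t. (\<alpha> has_real_derivative V t * (cos (\<alpha> t))\<^sup>2 + (sin (\<alpha> t))\<^sup>2) (at t)"
  obtains x0 \<rho> where "\<And>t. \<rho> t > 0"
    "\<And>t. t \<ge> 0 \<Longrightarrow> cos (\<alpha> t) = \<rho> t * cos (x0 + integral {0..t} (\<lambda>s. 1 / P s))"
    "\<And>t. t \<ge> 0 \<Longrightarrow> P t * sin (\<alpha> t) + Q t * cos (\<alpha> t)
                       = \<rho> t * sin (x0 + integral {0..t} (\<lambda>s. 1 / P s))"
proof -
  define p q where "p t = cos (\<alpha> t)" "q t = P t * sin (\<alpha> t) + Q t * cos (\<alpha> t)" for t
  define A where "A t = V t * (cos (\<alpha> t))\<^sup>2 + (sin (\<alpha> t))\<^sup>2" for t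
  define p' q' where "p' t = - sin (\<alpha> t) * A t"
    "q' t = 2 * Q t * sin (\<alpha> t) + P t * cos (\<alpha> t) * A t + (R t - V t * P t) * cos (\<alpha> t)
            - Q t * sin (\<alpha> t) * A t" for t
  have dp: "(p has_real_derivative p' t) (at t)" for t
    unfolding p_q_def p'_q'_def A_def using phase[of t] by (auto intro!: derivative_eq_intros)
  have dq: "(q has_real_derivative q' t) (at t)" for t
    unfolding p_q_def p'_q'_def A_def using phase[of t] P_deriv[of t] Q_deriv[of t]
    by (auto intro!: derivative_eq_intros simp: algebra_simps)
  have pos: "(p t)\<^sup>2 + (q t)\<^sup>2 > 0" for t
  proof (cases "p t = 0")
    case True
    then have "sin (\<alpha> t) \<noteq> 0" unfolding p_q_def using sin_cos_squared_add[of "\<alpha> t"] by auto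
    then have "q t \<noteq> 0" using True P_pos[of t] unfolding p_q_def by simp
    then show ?thesis by (simp add: sum_power2_gt_zero_iff)
  qed (simp add: sum_power2_gt_zero_iff)
  have angular: "1 / P t * ((p t)\<^sup>2 + (q t)\<^sup>2) = p t * q' t - q t * p' t" for t
    unfolding p_q_def p'_q'_def A_def
    by (rule prufer_companion_angular_identity[OF sin_cos_squared_add2 ermakov_invariant P_pos])
  obtain x0 where polar:
    "\<And>t. t \<ge> 0 \<Longrightarrow> p t = sqrt ((p t)\<^sup>2 + (q t)\<^sup>2) * cos (x0 + integral {0..t} (\<lambda>s. 1 / P s))"
    "\<And>t. t \<ge> 0 \<Longrightarrow> q t = sqrt ((p t)\<^sup>2 + (q t)\<^sup>2) * sin (x0 + integral {0..t} (\<lambda>s. 1 / P s))"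
    using polar_form_of_angular_velocity[OF dp dq pos
        continuous_on_indefinite_integral[OF continuous_on_inverse_P]
        indefinite_integral_has_real_derivative[OF continuous_on_inverse_P] angular]
    by blast
  show thesis
  proof (rule that)
    show "sqrt ((p t)\<^sup>2 + (q t)\<^sup>2) > 0" for t using pos[of t] by simp
  qed (use polar in \<open>simp_all only: p_q_def\<close>)
qed

lemma torus_phase_drift:
  assumes phase: "\<And>t. (\<alpha> has_real_derivative V t * (cos (\<alpha> t))\<^sup>2 + (sin (\<alpha> t))\<^sup>2) (at t)"
    and "t \<ge> 0"
  shows "\<bar>\<alpha> t - \<alpha> 0 - integral {0..t} (\<lambda>s. 1 / P s)\<bar> < 2 * pi"
proof -
  obtain x0 \<rho> where "\<And>t. \<rho> t > 0"
    and polar: "\<And>t. t \<ge> 0 \<Longrightarrow> cos (\<alpha> t) = \<rho> t * cos (x0 + integral {0..t} (\<lambda>s. 1 / P s))"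
      "\<And>t. t \<ge> 0 \<Longrightarrow> P t * sin (\<alpha> t) + Q t * cos (\<alpha> t)
                       = \<rho> t * sin (x0 + integral {0..t} (\<lambda>s. 1 / P s))"
    using prufer_companion_polar_form[OF phase] by metis
  define d where "d t = \<alpha> t - (x0 + integral {0..t} (\<lambda>s. 1 / P s))" for t
  have "cos (d t) \<noteq> -1" if "t \<ge> 0" for t
    unfolding d_def using \<open>\<rho> t > 0\<close> P_pos polar[OF that]
    by (intro cos_diff_ne_minus_one_if_aligned)
  moreover have "continuous_on {0..b} d" for b
  proof -
    have "continuous_on UNIV \<alpha>" by (intro continuous_at_imp_continuous_on ballI DERIV_isCont[OF phase])
    then show ?thesis
      using continuous_on_indefinite_integral[OF continuous_on_inverse_P]
      unfolding d_def by (intro continuous_intros) (auto intro: continuous_on_subset)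
  qed
  ultimately have "\<bar>d t - d 0\<bar> < 2 * pi"
    using cos_ne_minus_one_drift_less \<open>t \<ge> 0\<close> by blast
  then show ?thesis unfolding d_def by simp
qed

lemma average_inverse_P_tendsto:
  assumes "T > 0" and "\<And>t. P (t + T) = P t"
  shows "((\<lambda>t. integral {0..t} (\<lambda>s. 1 / P s) / t) \<longlongrightarrow> integral {0..T} (\<lambda>s. 1 / P s) / T) at_top"
  using continuous_on_inverse_P assms by (intro periodic_integral_average_tendsto) auto

lemma torus_rotation_number:
  assumes "T > 0" and "\<And>t. P (t + T) = P t" and "torus_flow_sol V \<phi>"
  shows "((\<lambda>t. (\<phi> t - \<phi> 0) / t) \<longlongrightarrow> 2 * integral {0..T} (\<lambda>s. 1 / P s) / T) at_top"
proof -
  define e where "e t = \<phi> t / 2 - \<phi> 0 / 2 - integral {0..t} (\<lambda>s. 1 / P s)" for t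
  have "\<bar>e t\<bar> \<le> 2 * pi" if "t \<ge> 0" for t
    using torus_phase_drift[OF torus_flow_sol_half_angle[OF assms(3)] that] unfolding e_def by simp
  then have "((\<lambda>t. 2 * (integral {0..t} (\<lambda>s. 1 / P s) / t) + 2 * (e t / t))
               \<longlongrightarrow> 2 * (integral {0..T} (\<lambda>s. 1 / P s) / T) + 2 * 0) at_top"
    by (intro tendsto_intros average_inverse_P_tendsto[OF assms(1,2)] bounded_div_tendsto_0_at_top)
  moreover have "2 * (integral {0..t} (\<lambda>s. 1 / P s) / t) + 2 * (e t / t) = (\<phi> t - \<phi> 0) / t" for t
    unfolding e_def by (cases "t = 0") (simp_all add: field_simps)
  ultimately show ?thesis by simp
qed

end

theorem mainTheorem5:
  fixes V :: "real \<Rightarrow> real" and T :: real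
  assumes "T > 0"
    and "continuous_on UNIV V"
    and "\<forall>t. V (t + T) = V t"
    and "hill_elliptic V T"
  shows "\<exists>u1 u2. hill_sol V u1 \<and> hill_sol V u2 \<and>
           (\<forall>t. u1 t * deriv u2 t - u2 t * deriv u1 t = 1) \<and>
           (let w = (\<lambda>t. sqrt ((u1 t)\<^sup>2 + (u2 t)\<^sup>2));
                \<theta>H = integral {0..T} (\<lambda>t. 1 / (w t)\<^sup>2) in
              (\<forall>t. w t > 0) \<and> (\<forall>t. w (t + T) = w t) \<and> ermakov_pinney_sol V w \<and>
              (\<forall>\<phi>. torus_flow_sol V \<phi> \<longrightarrow>
                  ((\<lambda>t. (\<phi> t - \<phi> 0) / t) \<longlongrightarrow> 2 * \<theta>H / T) at_top) \<and>
              ((\<lambda>t. 2 / t * integral {0..t} (\<lambda>s. 1 / ((u1 s)\<^sup>2 + (u2 s)\<^sup>2)))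
                  \<longlongrightarrow> 2 * \<theta>H / T) at_top \<and>
              (T = 2 * pi \<longrightarrow>
                  2 * \<theta>H / T = integral {0..2 * pi} (\<lambda>t. 1 / ((u1 t)\<^sup>2 + (u2 t)\<^sup>2)) / pi))"
proof -
  obtain u1 u1' u2 u2' where u1: "hill_solution V u1 u1'" and u2: "hill_solution V u2 u2'"
    and W: "\<And>t. u1 t * u2' t - u2 t * u1' t = 1"
    and periodic: "\<And>t. (u1 (t + T))\<^sup>2 + (u2 (t + T))\<^sup>2 = (u1 t)\<^sup>2 + (u2 t)\<^sup>2"
    using hill_elliptic_periodic_amplitude assms(3,4) by metis
  define P where "P t = (u1 t)\<^sup>2 + (u2 t)\<^sup>2" for t
  interpret ermakov_data V P "\<lambda>t. u1 t * u1' t + u2 t * u2' t" "\<lambda>t. (u1' t)\<^sup>2 + (u2' t)\<^sup>2"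
    unfolding P_def by (rule ermakov_data_of_wronskian_pair[OF u1 u2 W])
  have P_periodic: "P (t + T) = P t" for t unfolding P_def by (rule periodic)
  have "hill_sol V u1" "hill_sol V u2"
    using u1 u2 unfolding hill_sol_iff_hill_solution by blast+
  moreover have "\<forall>t. u1 t * deriv u2 t - u2 t * deriv u1 t = 1"
    using W hill_solution_deriv[OF u1] hill_solution_deriv[OF u2] by simp
  moreover have "((\<lambda>t. 2 / t * integral {0..t} (\<lambda>s. 1 / P s)) \<longlongrightarrow>
      2 * integral {0..T} (\<lambda>s. 1 / P s) / T) at_top"
    using tendsto_mult[OF tendsto_const[of 2] average_inverse_P_tendsto[OF \<open>T > 0\<close> P_periodic]]
    by simp
  moreover note P_pos less_imp_le[OF P_pos] P_periodic ermakov_pinney_sqrt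
    torus_rotation_number[OF \<open>T > 0\<close> P_periodic]
  ultimately show ?thesis
    unfolding Let_def by (intro exI[of _ u1] exI[of _ u2]) (auto simp: P_def[symmetric])
qed

end
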